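(* Let $M$ be an oriented connected compact $n$-manifold with boundary and let $z$ be a fundamental cycle in $C^{conic}_n(Dcone(M,\partial M))$. Then $\|z\|=\|z_M\|(1)$, i.e. $\|z\|=\|z_M\|+\|\partial z_M\|$.
   Context: $\|\cdot\|$ is the $\ell^1$-norm on real singular chains, and for a chain $c\in C_*(M)$, $\|c\|(1)=\|c\|+\|\partial c\|$. Let $\partial_1M,\dots,\partial_sM$ be the components of $\partial M$, $Cone(\partial_iM)=(\partial_iM\times[0,1])/(\partial_iM\times\{1\})$, and $Dcone(M,\partial M)$ the space obtained by gluing $\coprod_iCone(\partial_iM)$ to $M$ along $\coprod_i\partial_iM$. Identify $Cone(\Delta^{k-1})$ with $\Delta^k$ via $j_k$, which maps $\Delta^{k-1}\times\{0\}$ to the face $\Delta^{k-1}$ and each segment $p\times[0,1]$ linearly onto the segment from $p$ to the last vertex $e_{k+1}$. For a singular simplex $\tau:\Delta^{k-1}\to\partial_iM$, $cone(\tau):\Delta^k\cong Cone(\Delta^{k-1})\to Cone(\partial_iM)$ is $(\delta,t)\mapsto(\tau(\delta),t)$; then $\partial cone(\tau)=cone(\partial\tau)+(-1)^k\tau$. Let $C^{conic}_*(Dcone(M,\partial M))=C_*(M)\oplus Cone(C_{*-1}(\partial M))$, where $Cone(C_{k-1}(\partial M))$ is the real span of the simplices $cone(\tau)$, $\tau$ a singular $(k-1)$-simplex in $\partial M$; it is a subcomplex of $C_*(Dcone(M,\partial M))$ whose homology in degree $n$ has a fundamental class $[Dcone(M,\partial M)]_{conic}$; a fundamental cycle is a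 cycle representing it. For $z$ in this complex, $z_M$ denotes its component in $C_*(M)$. *)

theory Defs
  imports "HOL-Analysis.Analysis" "HOL-Homology.Homology"
begin

type_synonym 'a rchain = "((nat \<Rightarrow> real) \<Rightarrow> 'a) \<Rightarrow>\<^sub>0 real"

definition rchain :: "nat \<Rightarrow> 'a topology \<Rightarrow> 'a rchain \<Rightarrow> bool" where
  "rchain p X c \<longleftrightarrow> (\<forall>f \<in> Poly_Mapping.keys c. singular_simplex p X f)"

definition rbd :: "nat \<Rightarrow> 'a rchain \<Rightarrow> 'a rchain" where
  "rbd p c = (if p = 0 then 0 else
     (\<Sum>f \<in> Poly_Mapping.keys c. \<Sum>k\<le>p.
        Poly_Mapping.single (singular_face p k f) ((-1) ^ k * Poly_Mapping.lookup c f)))"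

definition rnorm :: "'a rchain \<Rightarrow> real" where
  "rnorm c = (\<Sum>f \<in> Poly_Mapping.keys c. \<bar>Poly_Mapping.lookup c f\<bar>)"

definition rpush :: "(((nat \<Rightarrow> real) \<Rightarrow> 'a) \<Rightarrow> ((nat \<Rightarrow> real) \<Rightarrow> 'b)) \<Rightarrow> 'a rchain \<Rightarrow> 'b rchain" where
  "rpush g c = (\<Sum>f \<in> Poly_Mapping.keys c. Poly_Mapping.single (g f) (Poly_Mapping.lookup c f))"

definition real_of_chain :: "'a chain \<Rightarrow> 'a rchain" where
  "real_of_chain c = Poly_Mapping.map of_int c"

definition half_space :: "nat \<Rightarrow> (nat \<Rightarrow> real) topology" where
  "half_space n = subtopology (Euclidean_space n) {x. 0 \<le> x 0}"

definition chart_at :: "nat \<Rightarrow> 'a topology \<Rightarrow> 'a \<Rightarrow> 'a set \<Rightarrow> (nat \<Rightarrow> real) set \<Rightarrow> ('a \<Rightarrow> nat \<Rightarrow> real) \<Rightarrow> bool" where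
  "chart_at n M x U V h \<longleftrightarrow> openin M U \<and> x \<in> U \<and> openin (half_space n) V \<and>
      homeomorphic_map (subtopology M U) (subtopology (half_space n) V) h"

definition manifold_with_boundary :: "nat \<Rightarrow> 'a topology \<Rightarrow> bool" where
  "manifold_with_boundary n M \<longleftrightarrow> Hausdorff_space M \<and> second_countable M \<and>
      (\<forall>x \<in> topspace M. \<exists>U V h. chart_at n M x U V h)"

definition mbd :: "nat \<Rightarrow> 'a topology \<Rightarrow> 'a set" where
  "mbd n M = {x \<in> topspace M. 0 < n \<and> (\<exists>U V h. chart_at n M x U V h \<and> h x 0 = 0)}"

text \<open>Integral fundamental class of (M, boundary M): a relative homology class whose
image in H_n(M, M - x) generates that group for every interior point x.  An
orientation of M is the choice of such a class.\<close>
definition int_fundamental_class :: "nat \<Rightarrow> 'a topology \<Rightarrow> 'a chain set \<Rightarrow> bool" where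
  "int_fundamental_class n M a \<longleftrightarrow>
     a \<in> carrier (relative_homology_group (int n) M (mbd n M)) \<and>
     (\<forall>x \<in> topspace M - mbd n M.
        carrier (subgroup_generated (relative_homology_group (int n) M (topspace M - {x}))
                   {hom_induced (int n) M (mbd n M) M (topspace M - {x}) id a})
        = carrier (relative_homology_group (int n) M (topspace M - {x})))"

text \<open>Points of Dcone(M,dM): Inl x for x in M (cone points at height 0 are
identified with boundary points of M), Inr (Inl (x,t)) for the cone point (x,t)
with 0 < t < 1, and Inr (Inr C) for the apex of Cone(C), C a component of dM.\<close>
type_synonym 'a dcone_pt = "'a + ('a \<times> real) + 'a set"

definition bd_component :: "nat \<Rightarrow> 'a topology \<Rightarrow> 'a \<Rightarrow> 'a set" where
  "bd_component n M x = connected_component_of_set (subtopology M (mbd n M)) x"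

text \<open>The quotient map from the cone on dM to Dcone(M,dM).\<close>
definition cone_pt :: "nat \<Rightarrow> 'a topology \<Rightarrow> 'a \<Rightarrow> real \<Rightarrow> 'a dcone_pt" where
  "cone_pt n M x t = (if t = 0 then Inl x
                      else if t = 1 then Inr (Inr (bd_component n M x))
                      else Inr (Inl (x, t)))"

text \<open>cone(tau) for a singular (k-1)-simplex tau in dM (here k - 1 = p), using the
identification j_k of Cone(Delta^p) with Delta^(p+1): (delta,t) maps to
(1-t) delta + t e_last, where the last vertex has index p+1.\<close>
definition cone_simplex :: "nat \<Rightarrow> 'a topology \<Rightarrow> nat \<Rightarrow> ((nat \<Rightarrow> real) \<Rightarrow> 'a)
                              \<Rightarrow> (nat \<Rightarrow> real) \<Rightarrow> 'a dcone_pt" where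
  "cone_simplex n M p \<tau> = restrict (\<lambda>y.
      let t = y (Suc p) in
      if t = 1 then cone_pt n M (\<tau> (\<lambda>i. if i = 0 then 1 else 0)) 1
      else cone_pt n M (\<tau> (\<lambda>i. if i \<le> p then y i / (1 - t) else 0)) t)
    (standard_simplex (Suc p))"

definition incl_simplex :: "nat \<Rightarrow> ((nat \<Rightarrow> real) \<Rightarrow> 'a) \<Rightarrow> (nat \<Rightarrow> real) \<Rightarrow> 'a dcone_pt" where
  "incl_simplex p f = restrict (Inl \<circ> f) (standard_simplex p)"

text \<open>The element z = z_M + cone(w) of C^conic_k(Dcone(M,dM)) = C_k(M) + Cone(C_(k-1)(dM)),
as a real singular chain of Dcone(M,dM).\<close>
definition conic_chain :: "nat \<Rightarrow> 'a topology \<Rightarrow> nat \<Rightarrow> 'a rchain \<Rightarrow> 'a rchain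
                             \<Rightarrow> 'a dcone_pt rchain" where
  "conic_chain n M k zM w =
     rpush (incl_simplex k) zM + (if k = 0 then 0 else rpush (cone_simplex n M (k - 1)) w)"

definition conic_chain_in :: "nat \<Rightarrow> 'a topology \<Rightarrow> nat \<Rightarrow> 'a rchain \<Rightarrow> 'a rchain \<Rightarrow> bool" where
  "conic_chain_in n M k zM w \<longleftrightarrow> rchain k M zM \<and>
     (if k = 0 then w = 0 else rchain (k - 1) (subtopology M (mbd n M)) w)"

text \<open>z = z_M + cone(w) is a fundamental cycle of C^conic_n(Dcone(M,dM)): it is a cycle
and its class corresponds to the (real image of the) fundamental class of
(M,dM) under H_n(C^conic) = H_n(M,dM;R), [z] |-> [z_M].\<close>
definition conic_fundamental_cycle :: "nat \<Rightarrow> 'a topology \<Rightarrow> 'a chain set \<Rightarrow> 'a rchain \<Rightarrow> 'a rchain \<Rightarrow> bool" where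
  "conic_fundamental_cycle n M a zM w \<longleftrightarrow>
     conic_chain_in n M n zM w \<and> rbd n (conic_chain n M n zM w) = 0 \<and>
     (\<exists>c \<in> a. \<exists>b e. rchain (Suc n) M b \<and> rchain n (subtopology M (mbd n M)) e \<and>
         zM - real_of_chain c = rbd (Suc n) b + e)"

end

theory Submission
  imports Defs
begin

text \<open>Write \<open>z = z\<^sub>M + cone(w)\<close> with \<open>w\<close> a chain in \<open>\<partial>M\<close>. Both the inclusion of \<open>M\<close> and the
cone construction are injective on simplices, and no simplex of \<open>M\<close> is a cone simplex, so
\<open>\<parallel>z\<parallel> = \<parallel>z\<^sub>M\<parallel> + \<parallel>w\<parallel>\<close>. Every face of \<open>cone(\<tau>)\<close> except the last one passes through the apex;
the last one is \<open>\<tau>\<close> itself. Hence the part of \<open>\<partial>z = 0\<close> lying in \<open>M\<close> reads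
\<open>\<partial>z\<^sub>M + (-1)\<^sup>n w = 0\<close>, and \<open>\<parallel>w\<parallel> = \<parallel>\<partial>z\<^sub>M\<parallel>\<close>.\<close>

lemma rpush_eq_sum:
  assumes "finite S" "Poly_Mapping.keys c \<subseteq> S"
  shows "rpush g c = (\<Sum>f\<in>S. Poly_Mapping.single (g f) (Poly_Mapping.lookup c f))"
  unfolding rpush_def
  by (rule sum.mono_neutral_left) (use assms in \<open>auto simp: in_keys_iff\<close>)

lemma rpush_add: "rpush g (c + d) = rpush g c + rpush g d"
proof -
  let ?S = "Poly_Mapping.keys c \<union> Poly_Mapping.keys d"
  have "Poly_Mapping.keys (c + d) \<subseteq> ?S" by (rule keys_add)
  then show ?thesis
    by (simp add: rpush_eq_sum[of ?S] lookup_add single_add sum.distrib)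
qed

lemma rpush_zero [simp]: "rpush g 0 = 0"
  by (simp add: rpush_def)

lemma rpush_sum: "finite A \<Longrightarrow> rpush g (\<Sum>x\<in>A. F x) = (\<Sum>x\<in>A. rpush g (F x))"
  by (induction A rule: finite_induct) (simp_all add: rpush_add)

lemma rpush_single [simp]: "rpush g (Poly_Mapping.single f a) = Poly_Mapping.single (g f) a"
  by (simp add: rpush_eq_sum[of "{f}"])

lemma rbd_eq_sum:
  assumes "0 < p" "finite S" "Poly_Mapping.keys c \<subseteq> S"
  shows "rbd p c = (\<Sum>f\<in>S. \<Sum>k\<le>p.
           Poly_Mapping.single (singular_face p k f) ((-1) ^ k * Poly_Mapping.lookup c f))"
  unfolding rbd_def using assms(1)
  by simp (rule sum.mono_neutral_left, use assms in \<open>auto simp: in_keys_iff\<close>)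

lemma rbd_zero [simp]: "rbd p 0 = 0"
  by (simp add: rbd_def)

lemma rbd_add: "rbd p (c + d) = rbd p c + rbd p d"
proof (cases "p = 0")
  case True
  then show ?thesis by (simp add: rbd_def)
next
  case False
  let ?S = "Poly_Mapping.keys c \<union> Poly_Mapping.keys d"
  have "Poly_Mapping.keys (c + d) \<subseteq> ?S" by (rule keys_add)
  with False show ?thesis
    by (simp add: rbd_eq_sum[of p ?S] lookup_add distrib_left single_add sum.distrib)
qed

lemma rbd_sum: "finite A \<Longrightarrow> rbd p (\<Sum>x\<in>A. F x) = (\<Sum>x\<in>A. rbd p (F x))"
  by (induction A rule: finite_induct) (simp_all add: rbd_add)

lemma rbd_single:
  "0 < p \<Longrightarrow> rbd p (Poly_Mapping.single f a) =
     (\<Sum>k\<le>p. Poly_Mapping.single (singular_face p k f) ((-1) ^ k * a))"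
  by (simp add: rbd_eq_sum[of p "{f}"])

lemma rbd_rpush_natural:
  assumes "0 < p"
    and "\<And>f k. f \<in> Poly_Mapping.keys c \<Longrightarrow> k \<le> p \<Longrightarrow> singular_face p k (g f) = g' (singular_face p k f)"
  shows "rbd p (rpush g c) = rpush g' (rbd p c)"
proof -
  have "rbd p (rpush g c) = (\<Sum>f\<in>Poly_Mapping.keys c. \<Sum>k\<le>p.
          Poly_Mapping.single (singular_face p k (g f)) ((-1) ^ k * Poly_Mapping.lookup c f))"
    using assms(1) by (simp add: rpush_def rbd_sum rbd_single)
  also have "\<dots> = rpush g' (rbd p c)"
    using assms by (simp add: rbd_eq_sum[of p "Poly_Mapping.keys c"] rpush_sum)
  finally show ?thesis .
qed

lemma keys_rpush: "Poly_Mapping.keys (rpush g c) \<subseteq> g ` Poly_Mapping.keys c"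
  unfolding rpush_def by (rule order_trans[OF keys_sum]) auto

lemma lookup_rpush_inj:
  assumes "inj_on g (insert f (Poly_Mapping.keys c))"
  shows "Poly_Mapping.lookup (rpush g c) (g f) = Poly_Mapping.lookup c f"
proof -
  have "Poly_Mapping.lookup (rpush g c) (g f) =
          (\<Sum>f'\<in>Poly_Mapping.keys c. if f' = f then Poly_Mapping.lookup c f' else 0)"
    unfolding rpush_def lookup_sum
    by (intro sum.cong refl) (use assms in \<open>auto simp: lookup_single when_def inj_on_def\<close>)
  then show ?thesis
    by (simp add: sum.delta' in_keys_iff)
qed

lemma rnorm_rpush:
  assumes "inj_on g (Poly_Mapping.keys c)"
  shows "rnorm (rpush g c) = rnorm c"
proof -
  have "rnorm (rpush g c) = (\<Sum>h\<in>g ` Poly_Mapping.keys c. \<bar>Poly_Mapping.lookup (rpush g c) h\<bar>)"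
    unfolding rnorm_def
    by (rule sum.mono_neutral_left) (use keys_rpush in \<open>auto simp: in_keys_iff\<close>)
  also have "\<dots> = (\<Sum>f\<in>Poly_Mapping.keys c. \<bar>Poly_Mapping.lookup (rpush g c) (g f)\<bar>)"
    by (simp add: sum.reindex[OF assms])
  also have "\<dots> = rnorm c"
    unfolding rnorm_def using assms by (simp add: lookup_rpush_inj insert_absorb)
  finally show ?thesis .
qed

lemma rnorm_add_disjoint:
  assumes "Poly_Mapping.keys c \<inter> Poly_Mapping.keys d = {}"
  shows "rnorm (c + d) = rnorm c + rnorm d"
proof -
  have "Poly_Mapping.lookup c f = 0 \<or> Poly_Mapping.lookup d f = 0" for f
    using assms by (auto simp: in_keys_iff)
  then have "Poly_Mapping.keys (c + d) = Poly_Mapping.keys c \<union> Poly_Mapping.keys d"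
    by (auto simp: in_keys_iff lookup_add) (metis add.right_neutral add.left_neutral)+
  moreover have "Poly_Mapping.lookup (c + d) f = Poly_Mapping.lookup c f"
    if "f \<in> Poly_Mapping.keys c" for f
    using assms that by (auto simp: in_keys_iff lookup_add)
  moreover have "Poly_Mapping.lookup (c + d) f = Poly_Mapping.lookup d f"
    if "f \<in> Poly_Mapping.keys d" for f
    using assms that by (auto simp: in_keys_iff lookup_add)
  ultimately show ?thesis
    unfolding rnorm_def by (simp add: sum.union_disjoint[OF _ _ assms])
qed

lemma rnorm_eqI:
  assumes "\<And>f. \<bar>Poly_Mapping.lookup c f\<bar> = \<bar>Poly_Mapping.lookup d f\<bar>"
  shows "rnorm c = rnorm d"
proof -
  have "Poly_Mapping.keys c = Poly_Mapping.keys d"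
    using assms by (metis abs_eq_0 in_keys_iff subsetI subset_antisym)
  then show ?thesis
    unfolding rnorm_def using assms by simp
qed

lemma keys_rchain: "rchain p X c \<Longrightarrow> Poly_Mapping.keys c \<subseteq> extensional (standard_simplex p)"
  by (auto simp: rchain_def singular_simplex_def)

lemma keys_rbd: "Poly_Mapping.keys (rbd p c) \<subseteq> extensional (standard_simplex (p - 1))"
  unfolding rbd_def
  by (auto intro!: order_trans[OF keys_sum] UN_least simp: singular_face_def split: if_splits)

lemma inj_on_incl_simplex: "inj_on (incl_simplex p) (extensional (standard_simplex p))"
proof (rule inj_onI)
  fix f g assume f: "f \<in> extensional (standard_simplex p)" and g: "g \<in> extensional (standard_simplex p)"
    and eq: "incl_simplex p f = incl_simplex p g"
  show "f = g"
  proof (rule extensionalityI[OF f g])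
    fix x assume "x \<in> standard_simplex p"
    then show "f x = g x" using fun_cong[OF eq, of x] by (simp add: incl_simplex_def)
  qed
qed

lemma singular_face_incl_simplex:
  assumes "k \<le> Suc m"
  shows "singular_face (Suc m) k (incl_simplex (Suc m) f) = incl_simplex m (singular_face (Suc m) k f)"
proof (rule ext)
  fix x
  show "singular_face (Suc m) k (incl_simplex (Suc m) f) x = incl_simplex m (singular_face (Suc m) k f) x"
  proof (cases "x \<in> standard_simplex m")
    case True
    then have "simplical_face k x \<in> standard_simplex (Suc m)"
      using simplical_face_in_standard_simplex[of "Suc m" k x] assms by simp
    then show ?thesis using True by (simp add: singular_face_def incl_simplex_def)
  next
    case False
    then show ?thesis by (simp add: singular_face_def incl_simplex_def)
  qed
qed

lemma singular_face_cone_simplex_last: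
  assumes "\<tau> \<in> extensional (standard_simplex m)"
  shows "singular_face (Suc m) (Suc m) (cone_simplex n M m \<tau>) = incl_simplex m \<tau>"
proof (rule ext)
  fix x
  show "singular_face (Suc m) (Suc m) (cone_simplex n M m \<tau>) x = incl_simplex m \<tau> x"
  proof (cases "x \<in> standard_simplex m")
    case True
    let ?y = "simplical_face (Suc m) x"
    have y: "?y \<in> standard_simplex (Suc m)"
      using simplical_face_in_standard_simplex[of "Suc m" "Suc m" x] True by simp
    have y0: "?y (Suc m) = 0" by (simp add: simplical_face_def)
    have xe: "(\<lambda>i. if i \<le> m then ?y i / (1 - ?y (Suc m)) else 0) = x"
    proof
      fix i show "(if i \<le> m then ?y i / (1 - ?y (Suc m)) else 0) = x i"
        using True by (auto simp: simplical_face_def standard_simplex_def)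
    qed
    have "cone_simplex n M m \<tau> ?y = Inl (\<tau> x)"
      unfolding cone_simplex_def using y y0 xe by (simp add: Let_def cone_pt_def)
    then show ?thesis using True by (simp add: singular_face_def incl_simplex_def)
  next
    case False
    then show ?thesis by (simp add: singular_face_def incl_simplex_def)
  qed
qed

lemma cone_simplex_apex:
  assumes "y \<in> standard_simplex (Suc m)" and "y (Suc m) = 1"
  shows "cone_simplex n M m \<tau> y = Inr (Inr (bd_component n M (\<tau> (\<lambda>i. if i = 0 then 1 else 0))))"
  using assms by (simp add: cone_simplex_def cone_pt_def)

lemma singular_face_cone_simplex_neq_incl_simplex:
  assumes "k \<le> m"
  shows "singular_face (Suc m) k (cone_simplex n M m \<tau>) \<noteq> incl_simplex m \<sigma>"
proof
  assume eq: "singular_face (Suc m) k (cone_simplex n M m \<tau>) = incl_simplex m \<sigma>"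
  define x where "x = (\<lambda>j. if j = m then 1 else (0::real))"
  have x: "x \<in> standard_simplex m"
    by (simp add: x_def)
  have "simplical_face k x \<in> standard_simplex (Suc m)" "simplical_face k x (Suc m) = 1"
    using simplical_face_in_standard_simplex[of "Suc m" k x] x assms
    by (simp_all add: simplical_face_def x_def)
  then show False
    using fun_cong[OF eq, of x] x
    by (simp add: singular_face_def incl_simplex_def cone_simplex_apex)
qed

lemma incl_simplex_neq_cone_simplex: "incl_simplex (Suc m) f \<noteq> cone_simplex n M m \<tau>"
proof
  assume eq: "incl_simplex (Suc m) f = cone_simplex n M m \<tau>"
  define y where "y = (\<lambda>j. if j = Suc m then 1 else (0::real))"
  have "y \<in> standard_simplex (Suc m)" "y (Suc m) = 1"
    by (simp_all add: y_def)
  then show False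
    using fun_cong[OF eq, of y] by (simp add: incl_simplex_def cone_simplex_apex)
qed

text \<open>A cone simplex is recovered from its values at height 1/2, where the cone is not collapsed.\<close>

lemma inj_on_cone_simplex: "inj_on (cone_simplex n M m) (extensional (standard_simplex m))"
proof (rule inj_onI)
  fix f g assume f: "f \<in> extensional (standard_simplex m)" and g: "g \<in> extensional (standard_simplex m)"
    and eq: "cone_simplex n M m f = cone_simplex n M m g"
  show "f = g"
  proof (rule extensionalityI[OF f g])
    fix x assume x: "x \<in> standard_simplex m"
    define y where "y = (\<lambda>i. if i = Suc m then 1/2 else x i / (2::real))"
    have sx: "(\<Sum>i\<le>m. x i) = 1" and x01: "\<And>i. 0 \<le> x i \<and> x i \<le> 1"
      and x0: "\<And>i. i > m \<Longrightarrow> x i = 0"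
      using x by (auto simp: standard_simplex_def)
    have "(\<Sum>i\<le>Suc m. y i) = (\<Sum>i\<le>m. x i) / 2 + 1/2"
      by (simp add: y_def sum_divide_distrib)
    moreover have "0 \<le> y i \<and> y i \<le> 1" for i
      using x01[of i] by (simp add: y_def)
    moreover have "i > Suc m \<Longrightarrow> y i = 0" for i
      using x0 by (simp add: y_def)
    ultimately have y: "y \<in> standard_simplex (Suc m)"
      using sx by (simp add: standard_simplex_def)
    have x_eq: "(\<lambda>i. if i \<le> m then y i / (1 - y (Suc m)) else 0) = x"
      using x0 by (auto simp: y_def)
    have "cone_simplex n M m h y = Inr (Inl (h x, 1/2))" for h
      using y x_eq by (simp add: cone_simplex_def cone_pt_def Let_def) (simp add: y_def)
    then show "f x = g x"
      using fun_cong[OF eq, of y] by simp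
  qed
qed

lemma lookup_rbd_rpush_cone_simplex:
  fixes w :: "'a rchain"
  assumes "Poly_Mapping.keys w \<subseteq> extensional (standard_simplex m)"
    and "\<sigma> \<in> extensional (standard_simplex m)"
  shows "Poly_Mapping.lookup (rbd (Suc m) (rpush (cone_simplex n M m) w)) (incl_simplex m \<sigma>)
           = (-1) ^ Suc m * Poly_Mapping.lookup w \<sigma>"
proof -
  have "Poly_Mapping.lookup (rbd (Suc m) (Poly_Mapping.single (cone_simplex n M m f) r)) (incl_simplex m \<sigma>)
          = (if f = \<sigma> then (-1) ^ Suc m * r else 0)"
    if "f \<in> Poly_Mapping.keys w" for f and r :: real
  proof -
    have f: "f \<in> extensional (standard_simplex m)"
      using assms(1) that by blast
    have "incl_simplex m f = incl_simplex m \<sigma> \<longleftrightarrow> f = \<sigma>"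
      using inj_onD[OF inj_on_incl_simplex[of m], of f \<sigma>] assms(2) f by auto
    then show ?thesis
      using f by (simp add: rbd_single lookup_add lookup_sum lookup_single when_def sum.atMost_Suc
          singular_face_cone_simplex_last singular_face_cone_simplex_neq_incl_simplex)
  qed
  then have "Poly_Mapping.lookup (rbd (Suc m) (rpush (cone_simplex n M m) w)) (incl_simplex m \<sigma>)
      = (\<Sum>f\<in>Poly_Mapping.keys w. if f = \<sigma> then (-1) ^ Suc m * Poly_Mapping.lookup w f else 0)"
    by (simp add: rpush_def rbd_sum lookup_sum)
  then show ?thesis
    by (simp add: sum.delta' in_keys_iff)
qed

lemma lookup_rbd_conic_cycle:
  assumes "conic_chain_in n M (Suc m) zM w"
    and "rbd (Suc m) (conic_chain n M (Suc m) zM w) = 0"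
  shows "Poly_Mapping.lookup (rbd (Suc m) zM) \<sigma> = (-1) ^ m * Poly_Mapping.lookup w \<sigma>"
proof (cases "\<sigma> \<in> extensional (standard_simplex m)")
  case False
  moreover have "Poly_Mapping.keys (rbd (Suc m) zM) \<subseteq> extensional (standard_simplex m)"
    using keys_rbd[of "Suc m" zM] by simp
  moreover have "Poly_Mapping.keys w \<subseteq> extensional (standard_simplex m)"
    using assms(1) keys_rchain by (auto simp: conic_chain_in_def)
  ultimately have "Poly_Mapping.lookup (rbd (Suc m) zM) \<sigma> = 0" "Poly_Mapping.lookup w \<sigma> = 0"
    by (metis in_keys_iff subsetD)+
  then show ?thesis
    by simp
next
  case True
  have zM: "Poly_Mapping.keys zM \<subseteq> extensional (standard_simplex (Suc m))"
    and w: "Poly_Mapping.keys w \<subseteq> extensional (standard_simplex m)"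
    using assms(1) keys_rchain by (auto simp: conic_chain_in_def)
  have "inj_on (incl_simplex m) (insert \<sigma> (Poly_Mapping.keys (rbd (Suc m) zM)))"
    by (rule inj_on_subset[OF inj_on_incl_simplex]) (use True keys_rbd[of "Suc m" zM] in auto)
  then have "Poly_Mapping.lookup (rbd (Suc m) (rpush (incl_simplex (Suc m)) zM)) (incl_simplex m \<sigma>)
               = Poly_Mapping.lookup (rbd (Suc m) zM) \<sigma>"
    by (simp add: rbd_rpush_natural[where g' = "incl_simplex m"] singular_face_incl_simplex
        lookup_rpush_inj)
  then have "0 = Poly_Mapping.lookup (rbd (Suc m) zM) \<sigma> + (-1) ^ Suc m * Poly_Mapping.lookup w \<sigma>"
    using arg_cong[OF assms(2), of "\<lambda>c. Poly_Mapping.lookup c (incl_simplex m \<sigma>)"]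
    by (simp add: conic_chain_def rbd_add lookup_add lookup_rbd_rpush_cone_simplex[OF w True])
  then show ?thesis
    by simp
qed

lemma rnorm_conic_chain:
  assumes "conic_chain_in n M k zM w"
  shows "rnorm (conic_chain n M k zM w) = rnorm zM + rnorm w"
proof (cases k)
  case 0
  with assms have "w = 0" and "inj_on (incl_simplex k) (Poly_Mapping.keys zM)"
    using inj_on_subset[OF inj_on_incl_simplex keys_rchain] by (auto simp: conic_chain_in_def)
  with 0 show ?thesis
    by (simp add: conic_chain_def rnorm_rpush) (simp add: rnorm_def)
next
  case (Suc m)
  have zM: "Poly_Mapping.keys zM \<subseteq> extensional (standard_simplex k)"
    and w: "Poly_Mapping.keys w \<subseteq> extensional (standard_simplex m)"
    using assms Suc keys_rchain by (auto simp: conic_chain_in_def)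
  have "Poly_Mapping.keys (rpush (incl_simplex k) zM) \<inter> Poly_Mapping.keys (rpush (cone_simplex n M m) w) = {}"
    using keys_rpush[of "incl_simplex k" zM] keys_rpush[of "cone_simplex n M m" w]
      incl_simplex_neq_cone_simplex Suc by blast
  then show ?thesis
    using Suc inj_on_subset[OF inj_on_incl_simplex zM] inj_on_subset[OF inj_on_cone_simplex w]
    by (simp add: conic_chain_def rnorm_add_disjoint rnorm_rpush)
qed

theorem lemma3p2:
  fixes M :: "'a topology" and n :: nat and a :: "'a chain set"
    and zM w :: "'a rchain"
  assumes "manifold_with_boundary n M"
    and "compact_space M" and "connected_space M" and "topspace M \<noteq> {}"
    and "int_fundamental_class n M a"
    and "conic_fundamental_cycle n M a zM w"
  shows "rnorm (conic_chain n M n zM w) = rnorm zM + rnorm (rbd n zM)"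
proof -
  have chain: "conic_chain_in n M n zM w" and cycle: "rbd n (conic_chain n M n zM w) = 0"
    using assms(6) by (auto simp: conic_fundamental_cycle_def)
  have "rnorm (rbd n zM) = rnorm w"
  proof (cases n)
    case 0
    with chain show ?thesis
      by (simp add: conic_chain_in_def rbd_def)
  next
    case (Suc m)
    with chain cycle show ?thesis
      by (intro rnorm_eqI) (simp add: lookup_rbd_conic_cycle abs_mult)
  qed
  with rnorm_conic_chain[OF chain] show ?thesis
    by simp
qed

end
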